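(* Let $A$ be a strongly AUF algebra and let $e\in A$ be a generating idempotent. Then the map $$\mathrm{SLF}(A)\to\mathrm{SLF}(eAe),\qquad \psi\mapsto\psi|_{eAe}$$ is a linear isomorphism, whose inverse is $\mathrm{SLF}(eAe)\to\mathrm{SLF}(A)$, $\phi\mapsto\mathrm{Tr}^\phi$, where $\mathrm{Tr}^\phi$ is the left pseudotrace on $A$ associated to $\phi$ and the $A$-$(eAe)$ bimodule $Ae$.
   Context: All algebras are associative $\mathbb C$-algebras, not necessarily unital. An idempotent is an element $e$ with $e^2=e$. An algebra $A$ is AUF if there is a family $(e_i)_{i\in\mathfrak I}$ of mutually orthogonal idempotents with $\dim e_iAe_j<\infty$ and $A=\sum_{i,j}e_iAe_j$. A left $A$-module $M$ is quasicoherent if $\xi\in A\xi$ for all $\xi\in M$. Irreducible means nonzero with no nonzero proper submodules. An idempotent $e\in A$ is generating if every irreducible quasicoherent left $A$-module is a quotient of $Ae$; $A$ is strongly AUF if it is AUF and has a generating idempotent. $\mathrm{SLF}(C)$ is the space of linear $\phi:C\to\mathbb C$ with $\phi(xy)=\phi(yx)$. Note $eAe$ is unital with unit $e$, and $Ae$ is an $A$-$(eAe)$ bimodule by multiplication. Left coordinate system (for algebras $A,B$, $B$ unital, $M$ an $A$-$B$ bimodule): right $B$-module maps $\alpha_i:B\to M$, $\check\alpha^i:M\to B$, $i\in I$, such that (a) for each $\xi\in M$, $\check\alpha^i(\xi)=0$ for all but finitely many $i$ and $\sum_i\alpha_i\check\alpha^i(\xi)=\xi$; (b) for each $x\in A$,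 $x\circ\alpha_i=0$ and $\check\alpha^i\circ x=0$ for all but finitely many $i$. Given one, the left pseudotrace of $\phi\in\mathrm{SLF}(B)$ is $\mathrm{Tr}^\phi(x)=\sum_i\phi(\check\alpha^i(x\,\alpha_i(1_B)))$, $x\in A$; it is independent of the left coordinate system and lies in $\mathrm{SLF}(A)$. Under the hypotheses of the claim, the $A$-$(eAe)$ bimodule $Ae$ admits a left coordinate system, so $\mathrm{Tr}^\phi$ is defined. *)

theory Defs
  imports Complex_Main
begin

text \<open>The algebra A is the whole carrier of a type of class ring (non-unital,
associative), with a complex scalar multiplication sc making it a C-algebra.\<close>

definition calg :: "(complex \<Rightarrow> 'a::ring \<Rightarrow> 'a) \<Rightarrow> bool" where
  "calg sc \<longleftrightarrow>
     (\<forall>c x y. sc c (x + y) = sc c x + sc c y) \<and>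
     (\<forall>c d x. sc (c + d) x = sc c x + sc d x) \<and>
     (\<forall>c d x. sc (c * d) x = sc c (sc d x)) \<and>
     (\<forall>x. sc 1 x = x) \<and>
     (\<forall>c x y. sc c (x * y) = sc c x * y) \<and>
     (\<forall>c x y. sc c (x * y) = x * sc c y)"

definition idem :: "'a::ring \<Rightarrow> bool" where
  "idem e \<longleftrightarrow> e * e = e"

definition fin_dim :: "(complex \<Rightarrow> 'a::ring \<Rightarrow> 'a) \<Rightarrow> 'a set \<Rightarrow> bool" where
  "fin_dim sc S \<longleftrightarrow> (\<exists>B. finite B \<and> B \<subseteq> S \<and>
      (\<forall>x\<in>S. \<exists>c. x = (\<Sum>b\<in>B. sc (c b) b)))"

definition corner2 :: "'a::ring \<Rightarrow> 'a \<Rightarrow> 'a set" where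
  "corner2 e f = {e * a * f | a. True}"

abbreviation corner :: "'a::ring \<Rightarrow> 'a set" where
  "corner e \<equiv> corner2 e e"

text \<open>AUF: a family of mutually orthogonal idempotents, represented by its set of
members E (a family of mutually orthogonal idempotents can only repeat the element 0,
which contributes nothing), with finite-dimensional corners, and A the (finite-sum)
sum of the corners.\<close>
definition AUF :: "(complex \<Rightarrow> 'a::ring \<Rightarrow> 'a) \<Rightarrow> bool" where
  "AUF sc \<longleftrightarrow> calg sc \<and> (\<exists>E::'a set.
     (\<forall>e\<in>E. idem e) \<and>
     (\<forall>e\<in>E. \<forall>f\<in>E. e \<noteq> f \<longrightarrow> e * f = 0) \<and>
     (\<forall>e\<in>E. \<forall>f\<in>E. fin_dim sc (corner2 e f)) \<and>
     (\<forall>x. \<exists>F g. finite F \<and> F \<subseteq> E \<times> E \<and>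
            (\<forall>p\<in>F. g p \<in> corner2 (fst p) (snd p)) \<and> x = (\<Sum>p\<in>F. g p)))"

record ('a, 'm) lmod =
  carr :: "'m set"
  madd :: "'m \<Rightarrow> 'm \<Rightarrow> 'm"
  mzero :: 'm
  mscal :: "complex \<Rightarrow> 'm \<Rightarrow> 'm"
  mact :: "'a \<Rightarrow> 'm \<Rightarrow> 'm"

definition left_module :: "(complex \<Rightarrow> 'a::ring \<Rightarrow> 'a) \<Rightarrow> ('a, 'm) lmod \<Rightarrow> bool" where
  "left_module sc M \<longleftrightarrow>
     mzero M \<in> carr M \<and>
     (\<forall>x\<in>carr M. \<forall>y\<in>carr M. madd M x y \<in> carr M) \<and>
     (\<forall>c. \<forall>x\<in>carr M. mscal M c x \<in> carr M) \<and>
     (\<forall>a. \<forall>x\<in>carr M. mact M a x \<in> carr M) \<and>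
     (\<forall>x\<in>carr M. \<forall>y\<in>carr M. \<forall>z\<in>carr M. madd M (madd M x y) z = madd M x (madd M y z)) \<and>
     (\<forall>x\<in>carr M. \<forall>y\<in>carr M. madd M x y = madd M y x) \<and>
     (\<forall>x\<in>carr M. madd M (mzero M) x = x) \<and>
     (\<forall>x\<in>carr M. \<exists>y\<in>carr M. madd M x y = mzero M) \<and>
     (\<forall>x\<in>carr M. mscal M 1 x = x) \<and>
     (\<forall>c d. \<forall>x\<in>carr M. mscal M (c * d) x = mscal M c (mscal M d x)) \<and>
     (\<forall>c d. \<forall>x\<in>carr M. mscal M (c + d) x = madd M (mscal M c x) (mscal M d x)) \<and>
     (\<forall>c. \<forall>x\<in>carr M. \<forall>y\<in>carr M. mscal M c (madd M x y) = madd M (mscal M c x) (mscal M c y)) \<and>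
     (\<forall>a b. \<forall>x\<in>carr M. mact M (a * b) x = mact M a (mact M b x)) \<and>
     (\<forall>a b. \<forall>x\<in>carr M. mact M (a + b) x = madd M (mact M a x) (mact M b x)) \<and>
     (\<forall>a. \<forall>x\<in>carr M. \<forall>y\<in>carr M. mact M a (madd M x y) = madd M (mact M a x) (mact M a y)) \<and>
     (\<forall>c a. \<forall>x\<in>carr M. mact M (sc c a) x = mscal M c (mact M a x)) \<and>
     (\<forall>c a. \<forall>x\<in>carr M. mact M a (mscal M c x) = mscal M c (mact M a x))"

definition submodule :: "('a::ring, 'm) lmod \<Rightarrow> 'm set \<Rightarrow> bool" where
  "submodule M N \<longleftrightarrow> N \<subseteq> carr M \<and> mzero M \<in> N \<and>
     (\<forall>x\<in>N. \<forall>y\<in>N. madd M x y \<in> N) \<and>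
     (\<forall>c. \<forall>x\<in>N. mscal M c x \<in> N) \<and>
     (\<forall>a. \<forall>x\<in>N. mact M a x \<in> N)"

definition quasicoherent :: "('a::ring, 'm) lmod \<Rightarrow> bool" where
  "quasicoherent M \<longleftrightarrow> (\<forall>\<xi>\<in>carr M. \<exists>a. \<xi> = mact M a \<xi>)"

definition irreducible_mod :: "('a::ring, 'm) lmod \<Rightarrow> bool" where
  "irreducible_mod M \<longleftrightarrow> carr M \<noteq> {mzero M} \<and>
     (\<forall>N. submodule M N \<longrightarrow> N = {mzero M} \<or> N = carr M)"

definition module_hom :: "('a::ring, 'm) lmod \<Rightarrow> ('a, 'n) lmod \<Rightarrow> ('m \<Rightarrow> 'n) \<Rightarrow> bool" where
  "module_hom M N f \<longleftrightarrow> f ` carr M \<subseteq> carr N \<and>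
     (\<forall>x\<in>carr M. \<forall>y\<in>carr M. f (madd M x y) = madd N (f x) (f y)) \<and>
     (\<forall>c. \<forall>x\<in>carr M. f (mscal M c x) = mscal N c (f x)) \<and>
     (\<forall>a. \<forall>x\<in>carr M. f (mact M a x) = mact N a (f x))"

definition Ae_mod :: "(complex \<Rightarrow> 'a::ring \<Rightarrow> 'a) \<Rightarrow> 'a \<Rightarrow> ('a, 'a) lmod" where
  "Ae_mod sc e = \<lparr>carr = {a * e | a. True}, madd = (+), mzero = 0, mscal = sc, mact = (*)\<rparr>"

text \<open>Modules are taken with carrier in the type 'a set; every
irreducible quasicoherent module M is cyclic (M = A\<xi>) hence isomorphic to a quotient
A/L whose elements are cosets, i.e. subsets of A, so this loses no generality.\<close>
definition generating_idem :: "(complex \<Rightarrow> 'a::ring \<Rightarrow> 'a) \<Rightarrow> 'a \<Rightarrow> bool" where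
  "generating_idem sc e \<longleftrightarrow> idem e \<and>
     (\<forall>M :: ('a, 'a set) lmod. left_module sc M \<and> quasicoherent M \<and> irreducible_mod M \<longrightarrow>
        (\<exists>f. module_hom (Ae_mod sc e) M f \<and> f ` carr (Ae_mod sc e) = carr M))"

definition strongly_AUF :: "(complex \<Rightarrow> 'a::ring \<Rightarrow> 'a) \<Rightarrow> bool" where
  "strongly_AUF sc \<longleftrightarrow> AUF sc \<and> (\<exists>e. generating_idem sc e)"

text \<open>SLF(C) for a subalgebra C of A; functionals are functions on A, required to vanish
outside C so that they are determined by their values on C.\<close>
definition SLF :: "(complex \<Rightarrow> 'a::ring \<Rightarrow> 'a) \<Rightarrow> 'a set \<Rightarrow> ('a \<Rightarrow> complex) set" where
  "SLF sc C = {\<phi>. (\<forall>x\<in>C. \<forall>y\<in>C. \<phi> (x + y) = \<phi> x + \<phi> y) \<and>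
                 (\<forall>c. \<forall>x\<in>C. \<phi> (sc c x) = c * \<phi> x) \<and>
                 (\<forall>x\<in>C. \<forall>y\<in>C. \<phi> (x * y) = \<phi> (y * x)) \<and>
                 (\<forall>x. x \<notin> C \<longrightarrow> \<phi> x = 0)}"

definition restr :: "'a::ring \<Rightarrow> ('a \<Rightarrow> complex) \<Rightarrow> ('a \<Rightarrow> complex)" where
  "restr e \<psi> = (\<lambda>x. if x \<in> corner e then \<psi> x else 0)"

definition lin_on :: "(complex \<Rightarrow> 'a::ring \<Rightarrow> 'a) \<Rightarrow> 'a set \<Rightarrow> ('a \<Rightarrow> 'a) \<Rightarrow> bool" where
  "lin_on sc S f \<longleftrightarrow> (\<forall>x\<in>S. \<forall>y\<in>S. f (x + y) = f x + f y) \<and>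
                      (\<forall>c. \<forall>x\<in>S. f (sc c x) = sc c (f x))"

definition left_coord_sys ::
  "(complex \<Rightarrow> 'a::ring \<Rightarrow> 'a) \<Rightarrow> 'a \<Rightarrow> 'i set \<Rightarrow> ('i \<Rightarrow> 'a \<Rightarrow> 'a) \<Rightarrow> ('i \<Rightarrow> 'a \<Rightarrow> 'a) \<Rightarrow> bool" where
  "left_coord_sys sc e I \<alpha> ac \<longleftrightarrow>
    (let B = corner e; M = carr (Ae_mod sc e) in
     (\<forall>i\<in>I. \<alpha> i ` B \<subseteq> M \<and> lin_on sc B (\<alpha> i) \<and>
             (\<forall>b\<in>B. \<forall>b'\<in>B. \<alpha> i (b * b') = \<alpha> i b * b')) \<and>
     (\<forall>i\<in>I. ac i ` M \<subseteq> B \<and> lin_on sc M (ac i) \<and>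
             (\<forall>m\<in>M. \<forall>b\<in>B. ac i (m * b) = ac i m * b)) \<and>
     (\<forall>\<xi>\<in>M. finite {i\<in>I. ac i \<xi> \<noteq> 0} \<and>
             \<xi> = (\<Sum>i\<in>{i\<in>I. ac i \<xi> \<noteq> 0}. \<alpha> i (ac i \<xi>))) \<and>
     (\<forall>x. finite {i\<in>I. \<exists>b\<in>B. x * \<alpha> i b \<noteq> 0} \<and>
          finite {i\<in>I. \<exists>m\<in>M. ac i (x * m) \<noteq> 0}))"

text \<open>Left pseudotrace Tr^phi(x) = sum_i phi(ac i (x * alpha i 1_B)), 1_B = e; the sum
is over the (finitely many) indices with nonzero term.\<close>
definition pseudotrace ::
  "'i set \<Rightarrow> ('i \<Rightarrow> 'a \<Rightarrow> 'a) \<Rightarrow> ('i \<Rightarrow> 'a \<Rightarrow> 'a) \<Rightarrow> 'a::ring \<Rightarrow> ('a \<Rightarrow> complex) \<Rightarrow> 'a \<Rightarrow> complex" where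
  "pseudotrace I \<alpha> ac e \<phi> x =
     (\<Sum>i\<in>{i\<in>I. \<phi> (ac i (x * \<alpha> i e)) \<noteq> 0}. \<phi> (ac i (x * \<alpha> i e)))"

end

theory Submission
  imports Defs
begin

text \<open>Every idempotent \<open>p\<close> of the AUF family lies in the ideal \<open>AeA\<close>: otherwise Zorn's lemma
  gives a left ideal \<open>N \<subseteq> Ap\<close>, maximal among those containing \<open>AeA \<inter> Ap\<close> but not \<open>p\<close>, and
  \<open>Ap/N\<close> is an irreducible quasicoherent module killed by \<open>e\<close>, hence not a quotient of \<open>Ae\<close>.
  So \<open>A = AeA\<close>, and a symmetric functional \<open>\<psi>\<close> on \<open>A\<close> is determined by its restriction,
  since \<open>\<psi>(aeb) = \<psi>(eb\<cdot>ae)\<close> with \<open>eb\<cdot>ae \<in> eAe\<close>.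
  Conversely the pseudotrace of \<open>\<phi>\<close> is symmetric because expanding \<open>y\<alpha>\<^sub>i(e)\<close> in the
  coordinate system writes \<open>Tr(xy)\<close> as a double sum of values of \<open>\<phi>\<close> on products in \<open>eAe\<close>,
  and it restricts to \<open>\<phi>\<close> because on \<open>eAe\<close> the coordinate expansion collapses. A coordinate
  system exists since each \<open>p = \<Sum>\<^sub>k a\<^sub>k e b\<^sub>k\<close> refactors as \<open>\<Sum>\<^sub>k (p a\<^sub>k e)(e b\<^sub>k p)\<close>.\<close>

lemma calgD:
  assumes "calg sc"
  shows calg_add: "sc c (x + y) = sc c x + sc c y"
    and calg_add_scalar: "sc (c + d) x = sc c x + sc d x"
    and calg_mult_scalar: "sc (c * d) x = sc c (sc d x)"
    and calg_one: "sc 1 x = x"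
    and calg_mult_left: "sc c (x * y) = sc c x * y"
    and calg_mult_right: "sc c (x * y) = x * sc c y"
  using assms unfolding calg_def by metis+

lemma calg_zero:
  assumes "calg sc"
  shows "sc c 0 = 0"
  using calg_add[OF assms, of c 0 0] by simp

lemma calg_diff:
  assumes "calg sc"
  shows "sc c (x - y) = sc c x - sc c y"
  using calg_add[OF assms, of c "x - y" y] by (simp add: algebra_simps)

lemma calg_minus_one:
  assumes "calg sc"
  shows "sc (-1) x = - x"
  using calg_add_scalar[OF assms, of "-1" 1 x] calg_add_scalar[OF assms, of 0 0 x] calg_one[OF assms]
  by (simp add: eq_neg_iff_add_eq_0)

lemma mem_Ae_iff: "idem e \<Longrightarrow> x \<in> {a * e | a. True} \<longleftrightarrow> x * e = x"
  unfolding idem_def by (auto simp: mult.assoc) metis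

lemma mem_corner_iff: "idem e \<Longrightarrow> x \<in> corner e \<longleftrightarrow> e * x = x \<and> x * e = x"
  unfolding idem_def corner2_def by (auto simp: mult.assoc) (metis mult.assoc)+

lemma corner_add: "idem e \<Longrightarrow> x \<in> corner e \<Longrightarrow> y \<in> corner e \<Longrightarrow> x + y \<in> corner e"
  by (simp add: mem_corner_iff algebra_simps)

lemma corner_mult: "idem e \<Longrightarrow> x \<in> corner e \<Longrightarrow> y \<in> corner e \<Longrightarrow> x * y \<in> corner e"
  by (simp add: mem_corner_iff) (metis mult.assoc)

lemma corner_scale: "calg sc \<Longrightarrow> idem e \<Longrightarrow> x \<in> corner e \<Longrightarrow> sc c x \<in> corner e"
  by (simp add: mem_corner_iff) (metis calg_mult_left calg_mult_right)

lemma additive_on_sum: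
  fixes f :: "'a::comm_monoid_add \<Rightarrow> 'b::ab_group_add"
  assumes add: "\<And>x y. x \<in> S \<Longrightarrow> y \<in> S \<Longrightarrow> f (x + y) = f x + f y"
    and zero: "0 \<in> S" and closed: "\<And>x y. x \<in> S \<Longrightarrow> y \<in> S \<Longrightarrow> x + y \<in> S"
    and g: "\<And>j. j \<in> U \<Longrightarrow> g j \<in> S"
  shows "f (\<Sum>j\<in>U. g j) = (\<Sum>j\<in>U. f (g j))"
proof -
  have f0: "f 0 = 0" using add[OF zero zero] by simp
  show ?thesis
  proof (cases "finite U")
    case True
    from this g have "f (\<Sum>j\<in>U. g j) = (\<Sum>j\<in>U. f (g j)) \<and> (\<Sum>j\<in>U. g j) \<in> S"
      by (induction U rule: finite_induct) (simp_all add: f0 zero add closed)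
    then show ?thesis ..
  qed (simp add: f0)
qed

section \<open>Pseudotraces\<close>

locale left_coordinate_system =
  fixes sc :: "complex \<Rightarrow> 'a::ring \<Rightarrow> 'a" and e :: 'a and I :: "'i set"
    and \<alpha> ac :: "'i \<Rightarrow> 'a \<Rightarrow> 'a"
  assumes calg: "calg sc" and idem: "idem e" and coord: "left_coord_sys sc e I \<alpha> ac"
begin

abbreviation Ae :: "'a set" where "Ae \<equiv> {a * e | a. True}"

lemma e_idem: "e * e = e"
  using idem unfolding idem_def .

lemma corner_Ae: "x \<in> corner e \<Longrightarrow> x \<in> Ae"
  unfolding mem_corner_iff[OF idem] mem_Ae_iff[OF idem] by simp

lemma e_corner: "e \<in> corner e"
  by (simp add: mem_corner_iff[OF idem] e_idem)

lemma zero_corner: "0 \<in> corner e"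
  by (simp add: mem_corner_iff[OF idem])

lemma zero_Ae: "0 \<in> Ae"
  unfolding mem_Ae_iff[OF idem] by simp

lemma Ae_add: "x \<in> Ae \<Longrightarrow> y \<in> Ae \<Longrightarrow> x + y \<in> Ae"
  unfolding mem_Ae_iff[OF idem] by (simp add: algebra_simps)

lemma Ae_mult_left: "x \<in> Ae \<Longrightarrow> a * x \<in> Ae"
  unfolding mem_Ae_iff[OF idem] by (simp add: mult.assoc)

lemma Ae_mult_corner: "x \<in> Ae \<Longrightarrow> b \<in> corner e \<Longrightarrow> x * b \<in> Ae"
  unfolding mem_Ae_iff[OF idem] mem_corner_iff[OF idem] by (simp add: mult.assoc)

lemma e_mult_Ae: "x \<in> Ae \<Longrightarrow> e * x \<in> corner e"
  unfolding mem_Ae_iff[OF idem] mem_corner_iff[OF idem] by (metis e_idem mult.assoc)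

lemmas coord_unfolded = coord[unfolded left_coord_sys_def Let_def Ae_mod_def lmod.simps]

lemma
  assumes i: "i \<in> I"
  shows \<alpha>_Ae: "b \<in> corner e \<Longrightarrow> \<alpha> i b \<in> Ae"
    and \<alpha>_add: "b \<in> corner e \<Longrightarrow> b' \<in> corner e \<Longrightarrow> \<alpha> i (b + b') = \<alpha> i b + \<alpha> i b'"
    and \<alpha>_mult: "b \<in> corner e \<Longrightarrow> b' \<in> corner e \<Longrightarrow> \<alpha> i (b * b') = \<alpha> i b * b'"
    and ac_corner: "m \<in> Ae \<Longrightarrow> ac i m \<in> corner e"
    and ac_add: "m \<in> Ae \<Longrightarrow> m' \<in> Ae \<Longrightarrow> ac i (m + m') = ac i m + ac i m'"
    and ac_scale: "m \<in> Ae \<Longrightarrow> ac i (sc c m) = sc c (ac i m)"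
    and ac_mult: "m \<in> Ae \<Longrightarrow> b \<in> corner e \<Longrightarrow> ac i (m * b) = ac i m * b"
proof -
  have \<alpha>: "\<alpha> i ` corner e \<subseteq> Ae \<and> lin_on sc (corner e) (\<alpha> i) \<and>
      (\<forall>b\<in>corner e. \<forall>b'\<in>corner e. \<alpha> i (b * b') = \<alpha> i b * b')"
    using coord_unfolded[THEN conjunct1] i by (rule bspec)
  have ac: "ac i ` Ae \<subseteq> corner e \<and> lin_on sc Ae (ac i) \<and>
      (\<forall>m\<in>Ae. \<forall>b\<in>corner e. ac i (m * b) = ac i m * b)"
    using coord_unfolded[THEN conjunct2, THEN conjunct1] i by (rule bspec)
  show "b \<in> corner e \<Longrightarrow> \<alpha> i b \<in> Ae"
    using \<alpha> by (simp add: image_subset_iff)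
  show "b \<in> corner e \<Longrightarrow> b' \<in> corner e \<Longrightarrow> \<alpha> i (b + b') = \<alpha> i b + \<alpha> i b'"
    using \<alpha> by (simp add: lin_on_def)
  show "b \<in> corner e \<Longrightarrow> b' \<in> corner e \<Longrightarrow> \<alpha> i (b * b') = \<alpha> i b * b'"
    using \<alpha> by simp
  show "m \<in> Ae \<Longrightarrow> ac i m \<in> corner e"
    using ac by (simp only: image_subset_iff)
  show "m \<in> Ae \<Longrightarrow> m' \<in> Ae \<Longrightarrow> ac i (m + m') = ac i m + ac i m'"
    using ac by (simp only: lin_on_def)
  show "m \<in> Ae \<Longrightarrow> ac i (sc c m) = sc c (ac i m)"
    using ac by (simp only: lin_on_def)
  show "m \<in> Ae \<Longrightarrow> b \<in> corner e \<Longrightarrow> ac i (m * b) = ac i m * b"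
    using ac by (simp only:)
qed

lemma coord_expansion:
  assumes "\<xi> \<in> Ae"
  shows "finite {i\<in>I. ac i \<xi> \<noteq> 0}" and "\<xi> = (\<Sum>i\<in>{i\<in>I. ac i \<xi> \<noteq> 0}. \<alpha> i (ac i \<xi>))"
proof -
  have "finite {i\<in>I. ac i \<xi> \<noteq> 0} \<and> \<xi> = (\<Sum>i\<in>{i\<in>I. ac i \<xi> \<noteq> 0}. \<alpha> i (ac i \<xi>))"
    using coord_unfolded[THEN conjunct2, THEN conjunct2, THEN conjunct1] assms by (rule bspec)
  then show "finite {i\<in>I. ac i \<xi> \<noteq> 0}" and "\<xi> = (\<Sum>i\<in>{i\<in>I. ac i \<xi> \<noteq> 0}. \<alpha> i (ac i \<xi>))"
    by (rule conjunct1, rule conjunct2)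
qed

definition trace_support :: "'a \<Rightarrow> 'i set" where
  "trace_support x = {i\<in>I. \<exists>m\<in>Ae. ac i (x * m) \<noteq> 0}"

lemma finite_trace_support: "finite (trace_support x)"
  unfolding trace_support_def
  by (rule coord_unfolded[THEN conjunct2, THEN conjunct2, THEN conjunct2, rule_format, THEN conjunct2])

lemma trace_support_subset: "trace_support x \<subseteq> I"
  unfolding trace_support_def by blast

lemma \<alpha>_zero: "i \<in> I \<Longrightarrow> \<alpha> i 0 = 0"
  using \<alpha>_add[OF _ zero_corner zero_corner] by simp

lemma \<alpha>_e_Ae: "i \<in> I \<Longrightarrow> \<alpha> i e \<in> Ae"
  by (rule \<alpha>_Ae[OF _ e_corner])

lemma \<alpha>_eq_mult: "i \<in> I \<Longrightarrow> b \<in> corner e \<Longrightarrow> \<alpha> i b = \<alpha> i e * b"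
  using \<alpha>_mult[OF _ e_corner, of i b] by (simp add: mem_corner_iff[OF idem])

lemma ac_mult_\<alpha>_corner: "i \<in> I \<Longrightarrow> j \<in> I \<Longrightarrow> ac i (x * \<alpha> j e) \<in> corner e"
  by (rule ac_corner, assumption, rule Ae_mult_left, rule \<alpha>_e_Ae)

lemma coord_expansion_over:
  assumes "\<xi> \<in> Ae" "finite U" "{i\<in>I. ac i \<xi> \<noteq> 0} \<subseteq> U" "U \<subseteq> I"
  shows "\<xi> = (\<Sum>i\<in>U. \<alpha> i (ac i \<xi>))"
proof -
  have "\<xi> = (\<Sum>i\<in>{i\<in>I. ac i \<xi> \<noteq> 0}. \<alpha> i (ac i \<xi>))"
    using coord_expansion(2)[OF assms(1)] .
  also have "\<dots> = (\<Sum>i\<in>U. \<alpha> i (ac i \<xi>))"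
    using assms \<alpha>_zero by (intro sum.mono_neutral_left) auto
  finally show ?thesis .
qed

lemma ac_mult_expansion:
  assumes i: "i \<in> I" and m: "m \<in> Ae" and U: "finite U" "{j\<in>I. ac j m \<noteq> 0} \<subseteq> U" "U \<subseteq> I"
  shows "ac i (x * m) = (\<Sum>j\<in>U. ac i (x * \<alpha> j e) * ac j m)"
proof -
  have m_coords: "\<And>j. j \<in> U \<Longrightarrow> ac j m \<in> corner e"
    using ac_corner[OF _ m] U(3) by blast
  have "x * m = (\<Sum>j\<in>U. x * \<alpha> j (ac j m))"
    using arg_cong[OF coord_expansion_over[OF m U], of "(*) x"] by (simp add: sum_distrib_left)
  also have "\<dots> = (\<Sum>j\<in>U. (x * \<alpha> j e) * ac j m)"
    using \<alpha>_eq_mult m_coords U(3) by (intro sum.cong) (auto simp: mult.assoc)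
  finally have "ac i (x * m) = ac i (\<Sum>j\<in>U. (x * \<alpha> j e) * ac j m)"
    by simp
  also have "\<dots> = (\<Sum>j\<in>U. ac i ((x * \<alpha> j e) * ac j m))"
  proof (rule additive_on_sum[where S = Ae, OF ac_add[OF i] zero_Ae Ae_add])
    fix j assume "j \<in> U"
    then show "x * \<alpha> j e * ac j m \<in> Ae"
      using U(3) by (intro Ae_mult_corner[OF Ae_mult_left[OF \<alpha>_e_Ae] m_coords]) auto
  qed
  also have "\<dots> = (\<Sum>j\<in>U. ac i (x * \<alpha> j e) * ac j m)"
    using ac_mult[OF i Ae_mult_left[OF \<alpha>_e_Ae] m_coords] U(3) by (intro sum.cong) auto
  finally show ?thesis .
qed

end

locale pseudotrace_setting = left_coordinate_system +
  fixes \<phi> :: "'a \<Rightarrow> complex"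
  assumes \<phi>: "\<phi> \<in> SLF sc (corner e)"
begin

abbreviation Tr :: "'a \<Rightarrow> complex" where "Tr \<equiv> pseudotrace I \<alpha> ac e \<phi>"

lemma
  shows \<phi>_add: "x \<in> corner e \<Longrightarrow> y \<in> corner e \<Longrightarrow> \<phi> (x + y) = \<phi> x + \<phi> y"
    and \<phi>_scale: "x \<in> corner e \<Longrightarrow> \<phi> (sc c x) = c * \<phi> x"
    and \<phi>_commute: "x \<in> corner e \<Longrightarrow> y \<in> corner e \<Longrightarrow> \<phi> (x * y) = \<phi> (y * x)"
    and \<phi>_outside: "x \<notin> corner e \<Longrightarrow> \<phi> x = 0"
  using \<phi> unfolding SLF_def by auto

lemma \<phi>_sum:
  "(\<And>j. j \<in> U \<Longrightarrow> g j \<in> corner e) \<Longrightarrow> \<phi> (\<Sum>j\<in>U. g j) = (\<Sum>j\<in>U. \<phi> (g j))"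
  by (rule additive_on_sum[where S = "corner e"])
    (auto intro: \<phi>_add zero_corner corner_add[OF idem])

lemma \<phi>_zero: "\<phi> 0 = 0"
  using \<phi>_add[OF zero_corner zero_corner] by simp

lemma common_trace_support:
  assumes "finite X"
  obtains U where "finite U" "U \<subseteq> I" "\<And>x. x \<in> X \<Longrightarrow> trace_support x \<subseteq> U"
  using assms finite_trace_support trace_support_subset
  by (intro that[of "\<Union>x\<in>X. trace_support x"]) auto

lemma Tr_eq_sum:
  assumes "finite U" "U \<subseteq> I" "trace_support x \<subseteq> U"
  shows "Tr x = (\<Sum>i\<in>U. \<phi> (ac i (x * \<alpha> i e)))"
  unfolding pseudotrace_def
proof (rule sum.mono_neutral_left)
  show "{i \<in> I. \<phi> (ac i (x * \<alpha> i e)) \<noteq> 0} \<subseteq> U"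
  proof
    fix i assume i: "i \<in> {i \<in> I. \<phi> (ac i (x * \<alpha> i e)) \<noteq> 0}"
    then have "ac i (x * \<alpha> i e) \<noteq> 0"
      using \<phi>_zero by force
    then have "i \<in> trace_support x"
      using i \<alpha>_e_Ae unfolding trace_support_def by (simp del: mem_Collect_eq) blast
    then show "i \<in> U" using assms by blast
  qed
qed (use assms in auto)

lemma Tr_add: "Tr (x + y) = Tr x + Tr y"
proof -
  obtain U where U: "finite U" "U \<subseteq> I" and supp: "\<And>z. z \<in> {x, y, x + y} \<Longrightarrow> trace_support z \<subseteq> U"
    using common_trace_support[of "{x, y, x + y}"] by blast
  have "Tr (x + y) = (\<Sum>i\<in>U. \<phi> (ac i ((x + y) * \<alpha> i e)))"
    using Tr_eq_sum[OF U supp] by simp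
  also have "\<dots> = (\<Sum>i\<in>U. \<phi> (ac i (x * \<alpha> i e)) + \<phi> (ac i (y * \<alpha> i e)))"
  proof (rule sum.cong)
    fix i assume "i \<in> U"
    then have i: "i \<in> I" using U by auto
    have "ac i ((x + y) * \<alpha> i e) = ac i (x * \<alpha> i e) + ac i (y * \<alpha> i e)"
      using ac_add[OF i Ae_mult_left Ae_mult_left, OF \<alpha>_e_Ae \<alpha>_e_Ae, OF i i]
      by (simp add: distrib_right)
    then show "\<phi> (ac i ((x + y) * \<alpha> i e)) = \<phi> (ac i (x * \<alpha> i e)) + \<phi> (ac i (y * \<alpha> i e))"
      using \<phi>_add[OF ac_mult_\<alpha>_corner ac_mult_\<alpha>_corner, OF i i i i] by simp
  qed simp
  also have "\<dots> = Tr x + Tr y"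
    using Tr_eq_sum[OF U supp] by (simp add: sum.distrib)
  finally show ?thesis .
qed

lemma Tr_scale: "Tr (sc c x) = c * Tr x"
proof -
  obtain U where U: "finite U" "U \<subseteq> I" and supp: "\<And>z. z \<in> {x, sc c x} \<Longrightarrow> trace_support z \<subseteq> U"
    using common_trace_support[of "{x, sc c x}"] by blast
  have "Tr (sc c x) = (\<Sum>i\<in>U. \<phi> (ac i (sc c x * \<alpha> i e)))"
    using Tr_eq_sum[OF U supp] by simp
  also have "\<dots> = (\<Sum>i\<in>U. c * \<phi> (ac i (x * \<alpha> i e)))"
  proof (rule sum.cong)
    fix i assume "i \<in> U"
    then have i: "i \<in> I" using U by auto
    have "ac i (sc c x * \<alpha> i e) = sc c (ac i (x * \<alpha> i e))"
      using ac_scale[OF i Ae_mult_left, OF \<alpha>_e_Ae, OF i] by (simp add: calg_mult_left[OF calg])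
    then show "\<phi> (ac i (sc c x * \<alpha> i e)) = c * \<phi> (ac i (x * \<alpha> i e))"
      using \<phi>_scale[OF ac_mult_\<alpha>_corner, OF i i] by simp
  qed simp
  also have "\<dots> = c * Tr x"
    using Tr_eq_sum[OF U supp] by (simp add: sum_distrib_left)
  finally show ?thesis .
qed

lemma trace_term_mult:
  assumes i: "i \<in> I" and U: "finite U" "U \<subseteq> I" "trace_support y \<subseteq> U"
  shows "\<phi> (ac i (x * y * \<alpha> i e)) = (\<Sum>j\<in>U. \<phi> (ac i (x * \<alpha> j e) * ac j (y * \<alpha> i e)))"
proof -
  define m where "m = y * \<alpha> i e"
  have m: "m \<in> Ae"
    unfolding m_def by (rule Ae_mult_left, rule \<alpha>_e_Ae[OF i])
  have "{j\<in>I. ac j m \<noteq> 0} \<subseteq> trace_support y"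
    unfolding trace_support_def m_def using \<alpha>_e_Ae[OF i] by (simp del: mem_Collect_eq) blast
  then have "ac i (x * y * \<alpha> i e) = (\<Sum>j\<in>U. ac i (x * \<alpha> j e) * ac j m)"
    using ac_mult_expansion[OF i m U(1) _ U(2)] U(3) unfolding m_def by (simp add: mult.assoc)
  moreover have "\<And>j. j \<in> U \<Longrightarrow> ac i (x * \<alpha> j e) * ac j m \<in> corner e"
    using U(2) ac_corner[OF _ m] by (intro corner_mult[OF idem ac_mult_\<alpha>_corner[OF i]]) auto
  ultimately show ?thesis
    using \<phi>_sum[of U "\<lambda>j. ac i (x * \<alpha> j e) * ac j m"] unfolding m_def by simp
qed

lemma Tr_commute: "Tr (x * y) = Tr (y * x)"
proof -
  obtain U where U: "finite U" "U \<subseteq> I"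
    and supp: "\<And>z. z \<in> {x, y, x * y, y * x} \<Longrightarrow> trace_support z \<subseteq> U"
    using common_trace_support[of "{x, y, x * y, y * x}"] by blast
  have "Tr (x * y) = (\<Sum>i\<in>U. \<phi> (ac i (x * y * \<alpha> i e)))"
    using Tr_eq_sum[OF U supp] by simp
  also have "\<dots> = (\<Sum>i\<in>U. \<Sum>j\<in>U. \<phi> (ac i (x * \<alpha> j e) * ac j (y * \<alpha> i e)))"
    using trace_term_mult[OF _ U supp] U(2) by (intro sum.cong) auto
  also have "\<dots> = (\<Sum>j\<in>U. \<Sum>i\<in>U. \<phi> (ac i (x * \<alpha> j e) * ac j (y * \<alpha> i e)))"
    by (rule sum.swap)
  also have "\<dots> = (\<Sum>j\<in>U. \<Sum>i\<in>U. \<phi> (ac j (y * \<alpha> i e) * ac i (x * \<alpha> j e)))"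
  proof (intro sum.cong refl)
    fix i j assume "i \<in> U" "j \<in> U"
    then have "i \<in> I" "j \<in> I" using U(2) by auto
    then show "\<phi> (ac i (x * \<alpha> j e) * ac j (y * \<alpha> i e)) = \<phi> (ac j (y * \<alpha> i e) * ac i (x * \<alpha> j e))"
      by (intro \<phi>_commute ac_mult_\<alpha>_corner)
  qed
  also have "\<dots> = (\<Sum>j\<in>U. \<phi> (ac j (y * x * \<alpha> j e)))"
    using trace_term_mult[OF _ U supp] U(2) by (intro sum.cong) auto
  also have "\<dots> = Tr (y * x)"
    using Tr_eq_sum[OF U supp] by simp
  finally show ?thesis .
qed

lemma pseudotrace_SLF: "Tr \<in> SLF sc UNIV"
  unfolding SLF_def using Tr_add Tr_scale Tr_commute by auto

lemma trace_term_corner: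
  assumes x: "x \<in> corner e" and i: "i \<in> I"
  shows "\<phi> (ac i (x * \<alpha> i e)) = \<phi> (e * \<alpha> i (ac i x))"
proof -
  have xAe: "x \<in> Ae" using corner_Ae[OF x] .
  have c: "ac i x \<in> corner e" using ac_corner[OF i xAe] .
  have e\<alpha>: "e * \<alpha> i e \<in> corner e"
    by (rule e_mult_Ae, rule \<alpha>_e_Ae[OF i])
  have "x * \<alpha> i e = x * (e * \<alpha> i e)"
    using x by (simp add: mem_corner_iff[OF idem] flip: mult.assoc)
  then have "\<phi> (ac i (x * \<alpha> i e)) = \<phi> (ac i x * (e * \<alpha> i e))"
    using ac_mult[OF i xAe e\<alpha>] by simp
  also have "\<dots> = \<phi> (e * \<alpha> i e * ac i x)"
    using \<phi>_commute[OF c e\<alpha>] .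
  also have "\<dots> = \<phi> (e * \<alpha> i (ac i x))"
    using \<alpha>_eq_mult[OF i c] by (simp add: mult.assoc)
  finally show ?thesis .
qed

lemma Tr_on_corner:
  assumes x: "x \<in> corner e"
  shows "Tr x = \<phi> x"
proof -
  have xAe: "x \<in> Ae" using corner_Ae[OF x] .
  define U where "U = trace_support x \<union> {i\<in>I. ac i x \<noteq> 0}"
  have U: "finite U" "U \<subseteq> I"
    unfolding U_def using finite_trace_support trace_support_subset coord_expansion(1)[OF xAe]
    by auto
  have supp: "trace_support x \<subseteq> U" and coords: "{i\<in>I. ac i x \<noteq> 0} \<subseteq> U"
    unfolding U_def by auto
  have "Tr x = (\<Sum>i\<in>U. \<phi> (e * \<alpha> i (ac i x)))"
    using Tr_eq_sum[OF U supp] trace_term_corner[OF x] U(2) by (auto intro: sum.cong)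
  also have "\<dots> = \<phi> (\<Sum>i\<in>U. e * \<alpha> i (ac i x))"
  proof (rule \<phi>_sum[symmetric])
    fix i assume "i \<in> U"
    then show "e * \<alpha> i (ac i x) \<in> corner e"
      using U(2) ac_corner[OF _ xAe] by (intro e_mult_Ae \<alpha>_Ae) auto
  qed
  also have "\<dots> = \<phi> (e * (\<Sum>i\<in>U. \<alpha> i (ac i x)))"
    by (simp add: sum_distrib_left)
  also have "\<dots> = \<phi> x"
    using coord_expansion_over[OF xAe U(1) coords U(2)] x by (simp add: mem_corner_iff[OF idem])
  finally show ?thesis .
qed

lemma restr_pseudotrace: "restr e Tr = \<phi>"
  unfolding restr_def using Tr_on_corner \<phi>_outside by auto

end

section \<open>Generating idempotents\<close>

definition AeA :: "'a::ring \<Rightarrow> 'a set" where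
  "AeA e = {x. \<exists>xs. x = (\<Sum>q\<leftarrow>xs. fst q * e * snd q)}"

lemma AeA_zero: "0 \<in> AeA e"
  unfolding AeA_def by (auto intro: exI[of _ "[]"])

lemma AeA_generator: "a * e * b \<in> AeA e"
  unfolding AeA_def by (auto intro: exI[of _ "[(a, b)]"])

lemma AeA_add: "x \<in> AeA e \<Longrightarrow> y \<in> AeA e \<Longrightarrow> x + y \<in> AeA e"
  unfolding AeA_def by (auto intro: exI[of _ "_ @ _"])

lemma AeA_mult_left:
  assumes "x \<in> AeA e"
  shows "c * x \<in> AeA e"
proof -
  obtain xs where x: "x = (\<Sum>q\<leftarrow>xs. fst q * e * snd q)"
    using assms unfolding AeA_def by blast
  have "c * x = (\<Sum>q\<leftarrow>map (\<lambda>q. (c * fst q, snd q)) xs. fst q * e * snd q)"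
    unfolding x by (simp add: sum_list_const_mult o_def mult.assoc)
  then show ?thesis unfolding AeA_def by blast
qed

lemma AeA_mult_right:
  assumes "x \<in> AeA e"
  shows "x * c \<in> AeA e"
proof -
  obtain xs where x: "x = (\<Sum>q\<leftarrow>xs. fst q * e * snd q)"
    using assms unfolding AeA_def by blast
  have "x * c = (\<Sum>q\<leftarrow>map (\<lambda>q. (fst q, snd q * c)) xs. fst q * e * snd q)"
    unfolding x sum_list_mult_const[symmetric] by (simp add: o_def mult.assoc)
  then show ?thesis unfolding AeA_def by blast
qed

lemma AeA_scale:
  assumes "calg sc" and "x \<in> AeA e"
  shows "sc c x \<in> AeA e"
proof -
  obtain xs where x: "x = (\<Sum>q\<leftarrow>xs. fst q * e * snd q)"
    using assms(2) unfolding AeA_def by blast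
  have "sc c x = (\<Sum>q\<leftarrow>map (\<lambda>q. (sc c (fst q), snd q)) xs. fst q * e * snd q)"
    unfolding x by (induction xs)
      (simp_all add: calg_zero calg_add calg_mult_left assms(1))
  then show ?thesis unfolding AeA_def by blast
qed

lemma AeA_sum: "(\<And>j. j \<in> U \<Longrightarrow> g j \<in> AeA e) \<Longrightarrow> (\<Sum>j\<in>U. g j) \<in> AeA e"
  by (induction U rule: infinite_finite_induct) (simp_all add: AeA_zero AeA_add)

definition left_ideal :: "(complex \<Rightarrow> 'a::ring \<Rightarrow> 'a) \<Rightarrow> 'a set \<Rightarrow> bool" where
  "left_ideal sc N \<longleftrightarrow> 0 \<in> N \<and> (\<forall>x\<in>N. \<forall>y\<in>N. x + y \<in> N) \<and>
     (\<forall>c. \<forall>x\<in>N. sc c x \<in> N) \<and> (\<forall>a. \<forall>x\<in>N. a * x \<in> N)"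

lemma left_idealI:
  assumes "0 \<in> N" "\<And>x y. x \<in> N \<Longrightarrow> y \<in> N \<Longrightarrow> x + y \<in> N"
    "\<And>c x. x \<in> N \<Longrightarrow> sc c x \<in> N" "\<And>a x. x \<in> N \<Longrightarrow> a * x \<in> N"
  shows "left_ideal sc N"
  using assms unfolding left_ideal_def by blast

lemma
  assumes "left_ideal sc N"
  shows left_ideal_zero: "0 \<in> N"
    and left_ideal_add: "x \<in> N \<Longrightarrow> y \<in> N \<Longrightarrow> x + y \<in> N"
    and left_ideal_scale: "x \<in> N \<Longrightarrow> sc c x \<in> N"
    and left_ideal_mult: "x \<in> N \<Longrightarrow> a * x \<in> N"
  using assms unfolding left_ideal_def by blast+

lemma left_ideal_Int: "left_ideal sc M \<Longrightarrow> left_ideal sc N \<Longrightarrow> left_ideal sc (M \<inter> N)"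
  unfolding left_ideal_def by blast

lemma left_ideal_AeA: "calg sc \<Longrightarrow> left_ideal sc (AeA e)"
  by (rule left_idealI) (simp_all add: AeA_zero AeA_add AeA_mult_left AeA_scale)

lemma left_ideal_right_fixed:
  assumes "calg sc"
  shows "left_ideal sc {x. x * p = x}"
proof (rule left_idealI)
  show "sc c x \<in> {x. x * p = x}" if "x \<in> {x. x * p = x}" for c x
    using that calg_mult_left[OF assms, of c x p] by simp
qed (simp_all add: distrib_right mult.assoc)

lemma left_ideal_diff:
  assumes "calg sc" "left_ideal sc N" "x \<in> N" "y \<in> N"
  shows "x - y \<in> N"
  using left_ideal_add[OF assms(2,3) left_ideal_scale[OF assms(2,4), of "-1"]]
  by (simp add: calg_minus_one[OF assms(1)])

lemma left_ideal_Union_chain: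
  assumes "C \<noteq> {}" "\<And>N. N \<in> C \<Longrightarrow> left_ideal sc N"
    and chain: "\<And>M N. M \<in> C \<Longrightarrow> N \<in> C \<Longrightarrow> M \<subseteq> N \<or> N \<subseteq> M"
  shows "left_ideal sc (\<Union>C)"
proof (rule left_idealI)
  show "0 \<in> \<Union>C" using assms(1,2) left_ideal_zero by blast
  show "x + y \<in> \<Union>C" if xy: "x \<in> \<Union>C" "y \<in> \<Union>C" for x y
  proof -
    obtain M N where "M \<in> C" "N \<in> C" "x \<in> M" "y \<in> N" using xy by blast
    then show ?thesis using chain[of M N] assms(2) left_ideal_add by blast
  qed
  show "sc c x \<in> \<Union>C" if "x \<in> \<Union>C" for c x
    using that assms(2) left_ideal_scale by blast
  show "a * x \<in> \<Union>C" if "x \<in> \<Union>C" for a x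
    using that assms(2) left_ideal_mult by blast
qed

lemma exists_maximal_left_ideal:
  assumes "left_ideal sc N0" "N0 \<subseteq> V" "p \<notin> N0"
  obtains N where "left_ideal sc N" "N0 \<subseteq> N" "N \<subseteq> V" "p \<notin> N"
    "\<And>N'. left_ideal sc N' \<Longrightarrow> N \<subseteq> N' \<Longrightarrow> N' \<subseteq> V \<Longrightarrow> p \<notin> N' \<Longrightarrow> N' = N"
proof -
  let ?F = "{N. left_ideal sc N \<and> N0 \<subseteq> N \<and> N \<subseteq> V \<and> p \<notin> N}"
  have "\<exists>N\<in>?F. \<forall>N'\<in>?F. N \<subseteq> N' \<longrightarrow> N' = N"
  proof (rule subset_Zorn_nonempty)
    show "?F \<noteq> {}" using assms by blast
  next
    fix C assume C: "C \<noteq> {}" "subset.chain ?F C"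
    then have C_F: "C \<subseteq> ?F" and chain: "\<And>M N. M \<in> C \<Longrightarrow> N \<in> C \<Longrightarrow> M \<subseteq> N \<or> N \<subseteq> M"
      unfolding subset_chain_def by blast+
    have "left_ideal sc (\<Union>C)"
      using C(1) C_F chain by (intro left_ideal_Union_chain) blast+
    moreover obtain N where "N \<in> C" using C(1) by blast
    ultimately show "\<Union>C \<in> ?F" using C_F by blast
  qed
  then obtain N where N: "N \<in> ?F" and maximal: "\<forall>N'\<in>?F. N \<subseteq> N' \<longrightarrow> N' = N" by blast
  show thesis
  proof (rule that)
    fix N' assume "left_ideal sc N'" "N \<subseteq> N'" "N' \<subseteq> V" "p \<notin> N'"
    moreover have "N0 \<subseteq> N'" using N \<open>N \<subseteq> N'\<close> by blast
    ultimately show "N' = N" using maximal by blast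
  qed (use N in simp_all)
qed

text \<open>The quotient \<open>V/N\<close> is realised by cosets, i.e. by subsets of the algebra, so that it
  has the module type quantified over in \<open>generating_idem\<close>.\<close>

definition coset :: "'a::ring set \<Rightarrow> 'a \<Rightarrow> 'a set" where
  "coset N x = {y. y - x \<in> N}"

definition quotient_lmod :: "(complex \<Rightarrow> 'a::ring \<Rightarrow> 'a) \<Rightarrow> 'a set \<Rightarrow> 'a set \<Rightarrow> ('a, 'a set) lmod" where
  "quotient_lmod sc V N =
    \<lparr>carr = coset N ` V, madd = (\<lambda>X Y. coset N ((SOME x. x \<in> X) + (SOME y. y \<in> Y))),
     mzero = coset N 0, mscal = (\<lambda>c X. coset N (sc c (SOME x. x \<in> X))),
     mact = (\<lambda>a X. coset N (a * (SOME x. x \<in> X)))\<rparr>"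

lemma quotient_carr: "carr (quotient_lmod sc V N) = coset N ` V"
  and quotient_mzero: "mzero (quotient_lmod sc V N) = coset N 0"
  by (simp_all add: quotient_lmod_def)

context
  fixes sc :: "complex \<Rightarrow> 'a::ring \<Rightarrow> 'a" and N :: "'a set"
  assumes calg: "calg sc" and N: "left_ideal sc N"
begin

lemma coset_eq_iff: "coset N x = coset N y \<longleftrightarrow> x - y \<in> N"
proof
  assume "coset N x = coset N y"
  moreover have "x \<in> coset N x" unfolding coset_def using left_ideal_zero[OF N] by simp
  ultimately show "x - y \<in> N" unfolding coset_def by blast
next
  assume xy: "x - y \<in> N"
  have "z - y \<in> N \<longleftrightarrow> z - x \<in> N" for z
    using left_ideal_add[OF N _ xy, of "z - x"] left_ideal_diff[OF calg N _ xy, of "z - y"]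
    by auto
  then show "coset N x = coset N y" unfolding coset_def by blast
qed

lemma some_coset: "(SOME y. y \<in> coset N x) - x \<in> N"
proof -
  have "x \<in> coset N x" unfolding coset_def using left_ideal_zero[OF N] by simp
  then have "(SOME y. y \<in> coset N x) \<in> coset N x" by (rule someI)
  then show ?thesis unfolding coset_def by simp
qed

lemma quotient_madd: "madd (quotient_lmod sc V N) (coset N x) (coset N y) = coset N (x + y)"
  using left_ideal_add[OF N some_coset[of x] some_coset[of y]]
  by (simp add: quotient_lmod_def coset_eq_iff algebra_simps)

lemma quotient_mscal: "mscal (quotient_lmod sc V N) c (coset N x) = coset N (sc c x)"
  using left_ideal_scale[OF N some_coset[of x], of c]
  by (simp add: quotient_lmod_def coset_eq_iff calg_diff[OF calg])

lemma quotient_mact: "mact (quotient_lmod sc V N) a (coset N x) = coset N (a * x)"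
  using left_ideal_mult[OF N some_coset[of x], of a]
  by (simp add: quotient_lmod_def coset_eq_iff right_diff_distrib)

lemma left_module_quotient:
  assumes V: "left_ideal sc V"
  shows "left_module sc (quotient_lmod sc V N)"
proof -
  have inverse: "\<exists>y\<in>V. coset N (x + y) = coset N 0" if "x \<in> V" for x
    using left_ideal_scale[OF V that, of "-1"] by (intro bexI[of _ "- x"]) (simp_all add: calg_minus_one[OF calg])
  show ?thesis
    unfolding left_module_def quotient_carr quotient_mzero
    using left_ideal_zero[OF V] left_ideal_add[OF V] left_ideal_scale[OF V] left_ideal_mult[OF V] inverse
    by (intro conjI)
      (auto simp: quotient_madd quotient_mscal quotient_mact calgD(1-4)[OF calg]
        calg_mult_left[OF calg, symmetric] calg_mult_right[OF calg, symmetric] algebra_simps)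
qed

lemma quasicoherent_quotient:
  assumes "\<And>x::'a. \<exists>u. u * x = x"
  shows "quasicoherent (quotient_lmod sc V N)"
  unfolding quasicoherent_def quotient_carr
proof
  fix X assume "X \<in> coset N ` V"
  then obtain x where X: "X = coset N x" by blast
  obtain u where "u * x = x" using assms[of x] ..
  then have "X = mact (quotient_lmod sc V N) u X" unfolding X by (simp add: quotient_mact)
  then show "\<exists>a. X = mact (quotient_lmod sc V N) a X" ..
qed

lemma left_ideal_quotient_preimage:
  assumes V: "left_ideal sc V" and S: "submodule (quotient_lmod sc V N) S"
  shows "left_ideal sc {x\<in>V. coset N x \<in> S}"
proof (rule left_idealI)
  have S_ops: "coset N 0 \<in> S" "\<And>X Y. X \<in> S \<Longrightarrow> Y \<in> S \<Longrightarrow> madd (quotient_lmod sc V N) X Y \<in> S"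
    "\<And>c X. X \<in> S \<Longrightarrow> mscal (quotient_lmod sc V N) c X \<in> S"
    "\<And>a X. X \<in> S \<Longrightarrow> mact (quotient_lmod sc V N) a X \<in> S"
    using S unfolding submodule_def quotient_mzero by blast+
  show "0 \<in> {x\<in>V. coset N x \<in> S}"
    using left_ideal_zero[OF V] S_ops(1) by simp
  show "x + y \<in> {x\<in>V. coset N x \<in> S}" if "x \<in> {x\<in>V. coset N x \<in> S}" "y \<in> {x\<in>V. coset N x \<in> S}" for x y
    using that left_ideal_add[OF V] S_ops(2)[of "coset N x" "coset N y"] by (simp add: quotient_madd)
  show "sc c x \<in> {x\<in>V. coset N x \<in> S}" if "x \<in> {x\<in>V. coset N x \<in> S}" for c x
    using that left_ideal_scale[OF V] S_ops(3)[of "coset N x" c] by (simp add: quotient_mscal)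
  show "a * x \<in> {x\<in>V. coset N x \<in> S}" if "x \<in> {x\<in>V. coset N x \<in> S}" for a x
    using that left_ideal_mult[OF V] S_ops(4)[of "coset N x" a] by (simp add: quotient_mact)
qed

lemma irreducible_quotient:
  assumes V: "left_ideal sc V" and "N \<subseteq> V" and p: "p \<in> V" "p \<notin> N"
    and cyclic: "\<And>x. x \<in> V \<Longrightarrow> \<exists>a. x = a * p"
    and maximal: "\<And>N'. left_ideal sc N' \<Longrightarrow> N \<subseteq> N' \<Longrightarrow> N' \<subseteq> V \<Longrightarrow> p \<notin> N' \<Longrightarrow> N' = N"
  shows "irreducible_mod (quotient_lmod sc V N)"
  unfolding irreducible_mod_def
proof (intro conjI allI impI)
  have p_nonzero: "coset N p \<noteq> coset N 0" using p(2) by (simp add: coset_eq_iff)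
  then show "carr (quotient_lmod sc V N) \<noteq> {mzero (quotient_lmod sc V N)}"
    using p(1) by (auto simp: quotient_carr quotient_mzero)
  fix S assume S: "submodule (quotient_lmod sc V N) S"
  have S_carr: "S \<subseteq> coset N ` V" and S_zero: "coset N 0 \<in> S"
    using S unfolding submodule_def quotient_carr quotient_mzero by auto
  show "S = {mzero (quotient_lmod sc V N)} \<or> S = carr (quotient_lmod sc V N)"
  proof (cases "S = {mzero (quotient_lmod sc V N)}")
    case False
    then obtain X where "X \<in> S" "X \<noteq> coset N 0"
      using S_zero by (auto simp: quotient_mzero)
    moreover from this S_carr obtain x0 where "x0 \<in> V" "X = coset N x0" by blast
    ultimately have x0: "x0 \<in> V" "coset N x0 \<in> S" "x0 \<notin> N"
      by (auto simp: coset_eq_iff)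
    define N' where "N' = {x\<in>V. coset N x \<in> S}"
    have "N \<subseteq> N'"
    proof
      fix x assume "x \<in> N"
      then have "coset N x = coset N 0" by (simp add: coset_eq_iff)
      then show "x \<in> N'" using \<open>x \<in> N\<close> \<open>N \<subseteq> V\<close> S_zero unfolding N'_def by auto
    qed
    moreover have "N' \<noteq> N" using x0 unfolding N'_def by blast
    ultimately have "p \<in> N'"
      using maximal left_ideal_quotient_preimage[OF V S] unfolding N'_def by blast
    then have "coset N x \<in> S" if "x \<in> V" for x
      using cyclic[OF that] S quotient_mact[of V] unfolding N'_def submodule_def by force
    then have "S = carr (quotient_lmod sc V N)" using S_carr by (auto simp: quotient_carr)
    then show ?thesis ..
  qed simp
qed

lemma module_hom_from_Ae_trivial:
  assumes e: "idem e" and e_kills: "\<And>x. x \<in> V \<Longrightarrow> e * x \<in> N"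
    and f: "module_hom (Ae_mod sc e) (quotient_lmod sc V N) f"
  shows "f ` carr (Ae_mod sc e) \<subseteq> {coset N 0}"
proof -
  have carr_Ae: "carr (Ae_mod sc e) = {a * e | a. True}"
    by (simp add: Ae_mod_def)
  have mem_Ae: "a * e \<in> carr (Ae_mod sc e)" for a
    unfolding carr_Ae by blast
  have f_mact: "f (a * e) = mact (quotient_lmod sc V N) a (f e)" for a
  proof -
    have "e \<in> carr (Ae_mod sc e)"
      using mem_Ae[of e] e unfolding idem_def by simp
    then show ?thesis
      using f[unfolded module_hom_def, THEN conjunct2, THEN conjunct2, THEN conjunct2, rule_format, of e a]
      by (simp add: Ae_mod_def)
  qed
  have "f e \<in> coset N ` V"
    using f[unfolded module_hom_def, THEN conjunct1] mem_Ae[of e] e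
    unfolding idem_def quotient_carr by auto
  then obtain z where z: "z \<in> V" "f e = coset N z" by blast
  have "f e = f (e * e)" using e unfolding idem_def by simp
  also have "\<dots> = coset N 0"
    using f_mact[of e] z e_kills[OF z(1)] by (simp add: quotient_mact coset_eq_iff)
  finally have "f (a * e) = coset N 0" for a
    using f_mact[of a] by (simp add: quotient_mact)
  then show ?thesis unfolding carr_Ae by auto
qed

end

lemma idempotent_in_AeA:
  fixes sc :: "complex \<Rightarrow> 'a::ring \<Rightarrow> 'a"
  assumes calg: "calg sc" and local_units: "\<And>x::'a. \<exists>u. u * x = x"
    and gen: "generating_idem sc e" and p: "p * p = p"
  shows "p \<in> AeA e"
proof (rule ccontr)
  assume p_notin: "p \<notin> AeA e"
  have e: "idem e" using gen unfolding generating_idem_def by blast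
  define V where "V = {x. x * p = x}"
  have V: "left_ideal sc V"
    unfolding V_def by (rule left_ideal_right_fixed[OF calg])
  have p_V: "p \<in> V" using p unfolding V_def by simp
  have cyclic: "\<exists>a. x = a * p" if "x \<in> V" for x
    using that unfolding V_def by (intro exI[of _ x]) simp
  define N0 where "N0 = AeA e \<inter> V"
  have N0: "left_ideal sc N0"
    unfolding N0_def by (rule left_ideal_Int[OF left_ideal_AeA[OF calg] V])
  obtain N where N: "left_ideal sc N" "N0 \<subseteq> N" "N \<subseteq> V" "p \<notin> N"
    and maximal: "\<And>N'. left_ideal sc N' \<Longrightarrow> N \<subseteq> N' \<Longrightarrow> N' \<subseteq> V \<Longrightarrow> p \<notin> N' \<Longrightarrow> N' = N"
    using exists_maximal_left_ideal[OF N0, of V p] p_notin unfolding N0_def by blast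
  have e_kills: "e * x \<in> N" if "x \<in> V" for x
  proof -
    have "e * x = e * e * x" using e unfolding idem_def by simp
    then have "e * x \<in> AeA e" using AeA_generator[of e e x] by simp
    moreover have "e * x \<in> V" using left_ideal_mult[OF V that] .
    ultimately show ?thesis using N(2) unfolding N0_def by blast
  qed
  let ?Q = "quotient_lmod sc V N"
  have "left_module sc ?Q" by (rule left_module_quotient[OF calg N(1) V])
  moreover have "quasicoherent ?Q" by (rule quasicoherent_quotient[OF calg N(1) local_units])
  moreover have irreducible: "irreducible_mod ?Q"
    by (rule irreducible_quotient[OF calg N(1) V N(3) p_V N(4) cyclic maximal])
  ultimately obtain f where f: "module_hom (Ae_mod sc e) ?Q f" "f ` carr (Ae_mod sc e) = carr ?Q"
    using gen unfolding generating_idem_def by blast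
  have "carr ?Q \<subseteq> {mzero ?Q}"
    using module_hom_from_Ae_trivial[OF calg N(1) e, where V = V, OF e_kills f(1)] f(2)
    by (simp add: quotient_mzero)
  moreover have "mzero ?Q \<in> carr ?Q"
    using left_ideal_zero[OF V] by (simp add: quotient_carr quotient_mzero)
  ultimately show False using irreducible unfolding irreducible_mod_def by blast
qed

section \<open>AUF families and coordinate systems\<close>

locale AUF_family =
  fixes sc :: "complex \<Rightarrow> 'a::ring \<Rightarrow> 'a" and E :: "'a set"
  assumes calg: "calg sc"
    and idem_E: "\<And>p. p \<in> E \<Longrightarrow> p * p = p"
    and orthogonal_E: "\<And>p q. p \<in> E \<Longrightarrow> q \<in> E \<Longrightarrow> p \<noteq> q \<Longrightarrow> p * q = 0"
    and decomposition: "\<And>x. \<exists>F g. finite F \<and> F \<subseteq> E \<times> E \<and>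
      (\<forall>pq\<in>F. g pq \<in> corner2 (fst pq) (snd pq)) \<and> x = (\<Sum>pq\<in>F. g pq)"

lemma AUF_imp_AUF_family:
  fixes sc :: "complex \<Rightarrow> 'a::ring \<Rightarrow> 'a"
  assumes "AUF sc"
  obtains E where "AUF_family sc E"
proof -
  from assms obtain E :: "'a set" where "calg sc" "\<forall>p\<in>E. idem p"
    "\<forall>p\<in>E. \<forall>q\<in>E. p \<noteq> q \<longrightarrow> p * q = 0"
    "\<forall>x. \<exists>F g. finite F \<and> F \<subseteq> E \<times> E \<and>
      (\<forall>pq\<in>F. g pq \<in> corner2 (fst pq) (snd pq)) \<and> x = (\<Sum>pq\<in>F. g pq)"
    unfolding AUF_def by auto
  then have "AUF_family sc E"
    by unfold_locales (auto simp: idem_def)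
  then show thesis ..
qed

context AUF_family
begin

lemma E_mult_corner2:
  assumes "p \<in> E" "q \<in> E" "y \<in> corner2 q r"
  shows "p * y = (if p = q then y else 0)"
proof -
  obtain c where "y = q * c * r" using assms(3) unfolding corner2_def by blast
  then show ?thesis
    using idem_E[OF assms(2)] orthogonal_E[OF assms(1,2)] by (simp flip: mult.assoc)
qed

lemma corner2_mult_E:
  assumes "p \<in> E" "q \<in> E" "y \<in> corner2 r q"
  shows "y * p = (if p = q then y else 0)"
proof -
  obtain c where "y = r * c * q" using assms(3) unfolding corner2_def by blast
  then show ?thesis
    using idem_E[OF assms(2)] orthogonal_E[OF assms(2,1)] by (auto simp: mult.assoc)
qed

lemma finite_left_support: "finite {p\<in>E. p * x \<noteq> 0}"
proof -
  obtain F g where F: "finite F" "F \<subseteq> E \<times> E" "\<And>pq. pq \<in> F \<Longrightarrow> g pq \<in> corner2 (fst pq) (snd pq)"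
    and x: "x = (\<Sum>pq\<in>F. g pq)"
    using decomposition[of x] by blast
  have "p * x = 0" if "p \<in> E" "p \<notin> fst ` F" for p
  proof -
    have "p * x = (\<Sum>pq\<in>F. p * g pq)" unfolding x by (simp add: sum_distrib_left)
    also have "\<dots> = 0"
    proof (rule sum.neutral, rule ballI)
      fix pq assume "pq \<in> F"
      then have "p * g pq = (if p = fst pq then g pq else 0)"
        using that(1) F(2) E_mult_corner2[OF _ _ F(3)[OF \<open>pq \<in> F\<close>], of p] by (force simp: mem_Times_iff)
      then show "p * g pq = 0" using that(2) \<open>pq \<in> F\<close> by auto
    qed
    finally show ?thesis .
  qed
  then have "{p\<in>E. p * x \<noteq> 0} \<subseteq> fst ` F" by blast
  then show ?thesis using F(1) finite_subset by blast
qed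

lemma finite_right_support: "finite {p\<in>E. x * p \<noteq> 0}"
proof -
  obtain F g where F: "finite F" "F \<subseteq> E \<times> E" "\<And>pq. pq \<in> F \<Longrightarrow> g pq \<in> corner2 (fst pq) (snd pq)"
    and x: "x = (\<Sum>pq\<in>F. g pq)"
    using decomposition[of x] by blast
  have "x * p = 0" if "p \<in> E" "p \<notin> snd ` F" for p
  proof -
    have "x * p = (\<Sum>pq\<in>F. g pq * p)" unfolding x by (simp add: sum_distrib_right)
    also have "\<dots> = 0"
    proof (rule sum.neutral, rule ballI)
      fix pq assume "pq \<in> F"
      then have "g pq * p = (if p = snd pq then g pq else 0)"
        using that(1) F(2) corner2_mult_E[OF _ _ F(3)[OF \<open>pq \<in> F\<close>], of p] by (force simp: mem_Times_iff)
      then show "g pq * p = 0" using that(2) \<open>pq \<in> F\<close> by auto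
    qed
    finally show ?thesis .
  qed
  then have "{p\<in>E. x * p \<noteq> 0} \<subseteq> snd ` F" by blast
  then show ?thesis using F(1) finite_subset by blast
qed

lemma sum_E_mult:
  assumes P: "finite P" "P \<subseteq> E" "{p\<in>E. p * x \<noteq> 0} \<subseteq> P"
  shows "(\<Sum>p\<in>P. p * x) = x"
proof -
  obtain F g where F: "finite F" "F \<subseteq> E \<times> E" "\<And>pq. pq \<in> F \<Longrightarrow> g pq \<in> corner2 (fst pq) (snd pq)"
    and x: "x = (\<Sum>pq\<in>F. g pq)"
    using decomposition[of x] by blast
  define Q where "Q = P \<union> fst ` F"
  have Q: "finite Q" "Q \<subseteq> E" using P F(1,2) unfolding Q_def by auto
  have "(\<Sum>p\<in>P. p * x) = (\<Sum>p\<in>Q. p * x)"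
    using Q P unfolding Q_def by (intro sum.mono_neutral_left) auto
  also have "\<dots> = (\<Sum>pq\<in>F. \<Sum>p\<in>Q. p * g pq)"
    unfolding x by (simp add: sum_distrib_left sum.swap[of _ F])
  also have "\<dots> = (\<Sum>pq\<in>F. g pq)"
  proof (rule sum.cong)
    fix pq assume pq: "pq \<in> F"
    then have "fst pq \<in> Q" unfolding Q_def by blast
    have "(\<Sum>p\<in>Q. p * g pq) = (\<Sum>p\<in>Q. if p = fst pq then g pq else 0)"
    proof (rule sum.cong)
      fix p assume "p \<in> Q"
      then show "p * g pq = (if p = fst pq then g pq else 0)"
        using Q(2) pq F(2) E_mult_corner2[OF _ _ F(3)[OF pq], of p] by (force simp: mem_Times_iff)
    qed simp
    then show "(\<Sum>p\<in>Q. p * g pq) = g pq"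
      using \<open>fst pq \<in> Q\<close> Q(1) by (simp add: sum.delta)
  qed simp
  finally show ?thesis unfolding x .
qed

lemma local_unit: "\<exists>u. u * x = (x::'a)"
proof
  show "(\<Sum>{p\<in>E. p * x \<noteq> 0}) * x = x"
    using sum_E_mult[OF finite_left_support] by (simp add: sum_distrib_right)
qed

lemma AeA_eq_UNIV:
  assumes gen: "generating_idem sc e"
  shows "x \<in> AeA e"
proof -
  obtain F g where F: "finite F" "F \<subseteq> E \<times> E" "\<And>pq. pq \<in> F \<Longrightarrow> g pq \<in> corner2 (fst pq) (snd pq)"
    and x: "x = (\<Sum>pq\<in>F. g pq)"
    using decomposition[of x] by blast
  have "g pq \<in> AeA e" if pq: "pq \<in> F" for pq
  proof -
    obtain c where "g pq = fst pq * c * snd pq" using F(3)[OF pq] unfolding corner2_def by blast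
    moreover have "fst pq \<in> AeA e"
      using idempotent_in_AeA[OF calg local_unit gen idem_E] pq F(2) by auto
    ultimately show ?thesis by (simp add: AeA_mult_right)
  qed
  then show ?thesis unfolding x by (rule AeA_sum)
qed

end

locale AUF_factorization = AUF_family +
  fixes e :: "'a::ring" and n :: "'a \<Rightarrow> nat" and a b :: "'a \<Rightarrow> nat \<Rightarrow> 'a"
  assumes idem_e: "idem e"
    and left_a: "\<And>p k. p \<in> E \<Longrightarrow> k < n p \<Longrightarrow> p * a p k = a p k"
    and left_b: "\<And>p k. p \<in> E \<Longrightarrow> k < n p \<Longrightarrow> e * b p k = b p k"
    and right_b: "\<And>p k. p \<in> E \<Longrightarrow> k < n p \<Longrightarrow> b p k * p = b p k"
    and factorization: "\<And>p. p \<in> E \<Longrightarrow> (\<Sum>k<n p. a p k * b p k) = p"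
begin

abbreviation J :: "('a \<times> nat) set" where "J \<equiv> SIGMA p:E. {..<n p}"

definition \<alpha> :: "'a \<times> nat \<Rightarrow> 'a \<Rightarrow> 'a" where "\<alpha> i y = a (fst i) (snd i) * y"

definition ac :: "'a \<times> nat \<Rightarrow> 'a \<Rightarrow> 'a" where "ac i y = b (fst i) (snd i) * y"

lemma finite_J_over: "finite P \<Longrightarrow> finite (SIGMA p:P. {..<n p})"
  by (rule finite_SigmaI) auto

lemma ac_nonzero:
  assumes "p \<in> E" "k < n p" "ac (p, k) z \<noteq> 0"
  shows "p * z \<noteq> 0"
  using assms right_b[OF assms(1,2)] unfolding ac_def by (metis fst_conv snd_conv mult.assoc mult_zero_right)

lemma \<alpha>_nonzero:
  assumes "p \<in> E" "k < n p" "z * \<alpha> (p, k) y \<noteq> 0"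
  shows "z * p \<noteq> 0"
  using assms left_a[OF assms(1,2)] unfolding \<alpha>_def by (metis fst_conv snd_conv mult.assoc mult_zero_left)

lemma coord_support: "{i\<in>J. ac i z \<noteq> 0} \<subseteq> (SIGMA p:{p\<in>E. p * z \<noteq> 0}. {..<n p})"
  using ac_nonzero by fastforce

lemma finite_mult_coord_support: "finite {i\<in>J. \<exists>m. ac i (x * m) \<noteq> 0}"
proof (rule finite_subset[OF _ finite_J_over[OF finite_left_support]])
  show "{i\<in>J. \<exists>m. ac i (x * m) \<noteq> 0} \<subseteq> (SIGMA p:{p\<in>E. p * x \<noteq> 0}. {..<n p})"
  proof (rule subsetI)
    fix i assume "i \<in> {i\<in>J. \<exists>m. ac i (x * m) \<noteq> 0}"
    then obtain p k m where i: "i = (p, k)" "p \<in> E" "k < n p" and "ac (p, k) (x * m) \<noteq> 0" by auto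
    then have "p * (x * m) \<noteq> 0" by (intro ac_nonzero)
    then have "p * x \<noteq> 0" by (metis mult.assoc mult_zero_left)
    then show "i \<in> (SIGMA p:{p\<in>E. p * x \<noteq> 0}. {..<n p})" using i by simp
  qed
qed

lemma finite_mult_\<alpha>_support: "finite {i\<in>J. \<exists>y. x * \<alpha> i y \<noteq> 0}"
proof (rule finite_subset[OF _ finite_J_over[OF finite_right_support]])
  show "{i\<in>J. \<exists>y. x * \<alpha> i y \<noteq> 0} \<subseteq> (SIGMA p:{p\<in>E. x * p \<noteq> 0}. {..<n p})"
    using \<alpha>_nonzero by fastforce
qed

lemma coord_expansion:
  "(\<Sum>i\<in>{i\<in>J. ac i x \<noteq> 0}. \<alpha> i (ac i x)) = x"
proof -
  define P where "P = {p\<in>E. p * x \<noteq> 0}"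
  have P: "finite P" "P \<subseteq> E" unfolding P_def using finite_left_support by auto
  have "(\<Sum>i\<in>{i\<in>J. ac i x \<noteq> 0}. \<alpha> i (ac i x)) = (\<Sum>i\<in>(SIGMA p:P. {..<n p}). \<alpha> i (ac i x))"
    using coord_support[of x] P(2) finite_J_over[OF P(1)] unfolding P_def
    by (intro sum.mono_neutral_left) (auto simp: \<alpha>_def)
  also have "\<dots> = (\<Sum>p\<in>P. \<Sum>k<n p. a p k * (b p k * x))"
    using P(1) by (subst sum.Sigma) (auto simp: \<alpha>_def ac_def split_def)
  also have "\<dots> = (\<Sum>p\<in>P. (\<Sum>k<n p. a p k * b p k) * x)"
    by (simp add: sum_distrib_right mult.assoc)
  also have "\<dots> = (\<Sum>p\<in>P. p * x)"
    using P(2) factorization by (intro sum.cong) auto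
  also have "\<dots> = x"
    using sum_E_mult P unfolding P_def by blast
  finally show ?thesis .
qed

lemma left_coord_sys: "left_coord_sys sc e J \<alpha> ac"
  unfolding left_coord_sys_def Let_def Ae_mod_def lmod.simps
proof (intro conjI ballI allI)
  fix i assume i: "i \<in> J"
  show "\<alpha> i ` corner e \<subseteq> {y * e | y. True}"
  proof
    fix z assume "z \<in> \<alpha> i ` corner e"
    then obtain y where "y \<in> corner e" "z = \<alpha> i y" by blast
    then show "z \<in> {y * e | y. True}"
      unfolding mem_Ae_iff[OF idem_e] using mem_corner_iff[OF idem_e] by (simp add: \<alpha>_def mult.assoc)
  qed
  show "lin_on sc (corner e) (\<alpha> i)"
    unfolding lin_on_def \<alpha>_def by (simp add: distrib_left calg_mult_right[OF calg])
  show "\<alpha> i (y * y') = \<alpha> i y * y'" for y y'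
    unfolding \<alpha>_def by (simp add: mult.assoc)
  show "ac i ` {y * e | y. True} \<subseteq> corner e"
  proof
    fix z assume "z \<in> ac i ` {y * e | y. True}"
    then obtain y where "y \<in> {y * e | y. True}" "z = ac i y" by blast
    moreover have "e * b (fst i) (snd i) = b (fst i) (snd i)"
      using left_b i by (cases i) auto
    ultimately show "z \<in> corner e"
      unfolding mem_corner_iff[OF idem_e] mem_Ae_iff[OF idem_e] ac_def
      by (metis mult.assoc)
  qed
  show "lin_on sc {y * e | y. True} (ac i)"
    unfolding lin_on_def ac_def by (simp add: distrib_left calg_mult_right[OF calg])
  show "ac i (y * y') = ac i y * y'" for y y'
    unfolding ac_def by (simp add: mult.assoc)
next
  fix \<xi>
  show "finite {i\<in>J. ac i \<xi> \<noteq> 0}"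
    using finite_subset[OF coord_support finite_J_over[OF finite_left_support]] .
  show "\<xi> = (\<Sum>i\<in>{i\<in>J. ac i \<xi> \<noteq> 0}. \<alpha> i (ac i \<xi>))"
    using coord_expansion by simp
next
  fix x
  show "finite {i\<in>J. \<exists>y\<in>corner e. x * \<alpha> i y \<noteq> 0}"
    using finite_mult_\<alpha>_support by (rule rev_finite_subset) blast
  show "finite {i\<in>J. \<exists>m\<in>{y * e | y. True}. ac i (x * m) \<noteq> 0}"
    using finite_mult_coord_support by (rule rev_finite_subset) blast
qed

end

context AUF_family
begin

lemma AUF_factorization_exists:
  assumes e: "idem e" and AeA: "\<And>x. x \<in> AeA e"
  obtains n a b where "AUF_factorization sc E e n a b"
proof -
  have "\<forall>p. \<exists>xs. p = (\<Sum>q\<leftarrow>xs. fst q * e * snd q)"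
    using AeA unfolding AeA_def by blast
  then obtain xs where xs: "\<And>p. p = (\<Sum>q\<leftarrow>xs p. fst q * e * snd q)"
    by (metis choice)
  define n where "n p = length (xs p)" for p
  define a where "a p k = p * fst (xs p ! k) * e" for p k
  define b where "b p k = e * snd (xs p ! k) * p" for p k
  have "AUF_factorization sc E e n a b"
  proof (rule AUF_factorization.intro[OF AUF_family_axioms], rule AUF_factorization_axioms.intro)
    show "idem e" by (rule e)
    show "p * a p k = a p k" if "p \<in> E" for p k
      using idem_E[OF that] by (simp add: a_def flip: mult.assoc)
    show "e * b p k = b p k" for p k
      using e unfolding idem_def by (simp add: b_def flip: mult.assoc)
    show "b p k * p = b p k" if "p \<in> E" for p k
      using idem_E[OF that] by (simp add: b_def mult.assoc)
    show "(\<Sum>k<n p. a p k * b p k) = p" if p: "p \<in> E" for p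
    proof -
      have ee: "e * (e * y) = e * y" for y
        using e unfolding idem_def by (simp flip: mult.assoc)
      have "(\<Sum>k<n p. a p k * b p k) = p * (\<Sum>k<n p. fst (xs p ! k) * e * snd (xs p ! k)) * p"
        unfolding a_def b_def by (simp add: sum_distrib_left sum_distrib_right mult.assoc ee)
      also have "\<dots> = p * p * p"
        using xs[of p] by (simp add: n_def sum_list_sum_nth atLeast0LessThan)
      finally show ?thesis using idem_E[OF p] by simp
    qed
  qed
  then show thesis ..
qed

lemma left_coord_sys_exists:
  assumes "generating_idem sc e"
  shows "\<exists>(I :: ('a \<times> nat) set) \<alpha> ac. left_coord_sys sc e I \<alpha> ac"
proof -
  have e: "idem e" using assms unfolding generating_idem_def by blast
  obtain n a b where "AUF_factorization sc E e n a b"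
    using AUF_factorization_exists[OF e AeA_eq_UNIV[OF assms]] .
  then show ?thesis using AUF_factorization.left_coord_sys by blast
qed

end

section \<open>Restriction to the corner\<close>

lemma restr_SLF:
  assumes "calg sc" "idem e" "\<psi> \<in> SLF sc UNIV"
  shows "restr e \<psi> \<in> SLF sc (corner e)"
  using assms(3) corner_add[OF assms(2)] corner_mult[OF assms(2)] corner_scale[OF assms(1,2)]
  unfolding SLF_def restr_def by auto

lemma SLF_eq_on_AeA:
  assumes e: "idem e" and \<psi>: "\<psi> \<in> SLF sc UNIV" "\<psi>' \<in> SLF sc UNIV"
    and restr_eq: "restr e \<psi> = restr e \<psi>'" and x: "x \<in> AeA e"
  shows "\<psi> x = \<psi>' x"
proof -
  have add: "\<And>y z. \<psi> (y + z) = \<psi> y + \<psi> z" "\<And>y z. \<psi>' (y + z) = \<psi>' y + \<psi>' z"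
    and comm: "\<And>y z. \<psi> (y * z) = \<psi> (z * y)" "\<And>y z. \<psi>' (y * z) = \<psi>' (z * y)"
    using \<psi> unfolding SLF_def by auto
  have generator: "\<psi> (a * e * b) = \<psi>' (a * e * b)" for a b
  proof -
    have "a * e * b = (a * e) * (e * b)"
      using e unfolding idem_def by (metis mult.assoc)
    moreover have "(e * b) * (a * e) = e * (b * a) * e"
      by (simp add: mult.assoc)
    moreover have "e * (b * a) * e \<in> corner e" unfolding corner2_def by blast
    ultimately show ?thesis
      using comm fun_cong[OF restr_eq, of "e * (b * a) * e"] unfolding restr_def by metis
  qed
  obtain xs where "x = (\<Sum>q\<leftarrow>xs. fst q * e * snd q)" using x unfolding AeA_def by blast
  moreover have "\<psi> (\<Sum>q\<leftarrow>xs. fst q * e * snd q) = \<psi>' (\<Sum>q\<leftarrow>xs. fst q * e * snd q)"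
    using add[of 0 0] by (induction xs) (simp_all add: add generator)
  ultimately show ?thesis by simp
qed

lemma pseudotrace_SLF_restr:
  assumes "calg sc" "idem e" "left_coord_sys sc e I \<alpha> ac" "\<phi> \<in> SLF sc (corner e)"
  shows "pseudotrace I \<alpha> ac e \<phi> \<in> SLF sc UNIV \<and> restr e (pseudotrace I \<alpha> ac e \<phi>) = \<phi>"
proof -
  interpret pseudotrace_setting sc e I \<alpha> ac \<phi>
    using assms by unfold_locales
  show ?thesis using pseudotrace_SLF restr_pseudotrace by blast
qed

theorem theorem6p6:
  fixes sc :: "complex \<Rightarrow> 'a::ring \<Rightarrow> 'a" and e :: 'a
    and I :: "'i set" and \<alpha> ac :: "'i \<Rightarrow> 'a \<Rightarrow> 'a"
  assumes "strongly_AUF sc"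
    and "generating_idem sc e"
  shows "bij_betw (restr e) (SLF sc UNIV) (SLF sc (corner e))
    \<and> (\<forall>\<psi> \<psi>' c d. restr e (\<lambda>x. c * \<psi> x + d * \<psi>' x)
                      = (\<lambda>x. c * restr e \<psi> x + d * restr e \<psi>' x))
    \<and> (left_coord_sys sc e I \<alpha> ac \<longrightarrow>
           (\<forall>\<phi>\<in>SLF sc (corner e). pseudotrace I \<alpha> ac e \<phi> \<in> SLF sc UNIV
                                   \<and> restr e (pseudotrace I \<alpha> ac e \<phi>) = \<phi>)
         \<and> (\<forall>\<psi>\<in>SLF sc UNIV. pseudotrace I \<alpha> ac e (restr e \<psi>) = \<psi>))"
proof -
  obtain E where "AUF_family sc E"
    using assms(1) AUF_imp_AUF_family unfolding strongly_AUF_def by blast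
  then interpret AUF_family sc E .
  have e: "idem e" using assms(2) unfolding generating_idem_def by blast
  have inj: "inj_on (restr e) (SLF sc UNIV)"
    using SLF_eq_on_AeA[OF e _ _ _ AeA_eq_UNIV[OF assms(2)]] by (auto simp: inj_on_def)
  obtain I0 :: "('a \<times> nat) set" and \<alpha>0 ac0 where "left_coord_sys sc e I0 \<alpha>0 ac0"
    using left_coord_sys_exists[OF assms(2)] by blast
  then have "SLF sc (corner e) \<subseteq> restr e ` SLF sc UNIV"
    using pseudotrace_SLF_restr[OF calg e] by (metis image_eqI subsetI)
  then have "bij_betw (restr e) (SLF sc UNIV) (SLF sc (corner e))"
    using inj restr_SLF[OF calg e] unfolding bij_betw_def by blast
  moreover have "left_coord_sys sc e I \<alpha> ac \<Longrightarrow> \<psi> \<in> SLF sc UNIV \<Longrightarrow>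
      pseudotrace I \<alpha> ac e (restr e \<psi>) = \<psi>" for \<psi>
    using inj_onD[OF inj] pseudotrace_SLF_restr[OF calg e _ restr_SLF[OF calg e]] by metis
  moreover have "restr e (\<lambda>x. c * \<psi> x + d * \<psi>' x) = (\<lambda>x. c * restr e \<psi> x + d * restr e \<psi>' x)"
    for \<psi> \<psi>' c d
    by (simp add: restr_def fun_eq_iff)
  ultimately show ?thesis
    using pseudotrace_SLF_restr[OF calg e] by blast
qed

end
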